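(* Let $\omega\in(0,1)$ and let $K\in\mathbb{R}^{n\times n}$ be diagonalizable with real negative eigenvalues. Let $\mathcal{A}=I_m\otimes I_n-(I^{(-1)}D)\otimes K$ and $\mathcal{P}(\omega)=I_m\otimes I_n-(S(\omega)D)\otimes K$. Then $\mathcal{P}(\omega)$ is nonsingular, at most $n$ eigenvalues of $\mathcal{P}(\omega)^{-1}\mathcal{A}$ (counted with multiplicity) differ from $1$, and $$\sigma(\mathcal{P}(\omega)^{-1}\mathcal{A})\subset\left[1,\tfrac{1}{1-\omega}\right).$$
   Context: $M\ge1$, $m=2M+1$, $h>0$, $T>0$. Sinc time points $t_j=\dfrac{T e^{jh}}{1+e^{jh}}$, $j=-M,\dots,M$. $D=h\,\mathrm{diag}\big(t_{-M}(T-t_{-M})/T,\dots,t_M(T-t_M)/T\big)$. $I^{(-1)}\in\mathbb{R}^{m\times m}$ is the Toeplitz matrix with entries $I^{(-1)}_{l,j}=\frac12+\int_0^{l-j}\frac{\sin(\pi t)}{\pi t}\,dt$. $e_m=(1,\dots,1)^{\mathsf T}\in\mathbb{R}^m$. $S(\omega):=I^{(-1)}-\frac{\omega}{2}e_me_m^{\mathsf T}$. $\otimes$ is the Kronecker product and $I_p$ the $p\times p$ identity. *)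

theory Defs
  imports "HOL-Analysis.Henstock_Kurzweil_Integration"
    "Jordan_Normal_Form.Matrix" "Jordan_Normal_Form.Char_Poly"
begin

definition sinc_int :: "real \<Rightarrow> real" where
  "sinc_int x = (if 0 \<le> x then integral {0..x} (\<lambda>t. sin (pi * t) / (pi * t))
                 else - integral {x..0} (\<lambda>t. sin (pi * t) / (pi * t)))"

definition kron :: "'a :: times mat \<Rightarrow> 'a mat \<Rightarrow> 'a mat" where
  "kron A B = mat (dim_row A * dim_row B) (dim_col A * dim_col B)
     (\<lambda>(i, j). A $$ (i div dim_row B, j div dim_col B) * B $$ (i mod dim_row B, j mod dim_col B))"

text \<open>Sinc time points t_j, j = -M..M, stored at index l = j + M (0 \<le> l < 2M+1).\<close>
definition sinc_pt :: "nat \<Rightarrow> real \<Rightarrow> real \<Rightarrow> nat \<Rightarrow> real" where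
  "sinc_pt M h T l = T * exp ((real_of_int (int l - int M)) * h) / (1 + exp ((real_of_int (int l - int M)) * h))"

definition Dmat :: "nat \<Rightarrow> real \<Rightarrow> real \<Rightarrow> real mat" where
  "Dmat M h T = mat (2*M+1) (2*M+1)
     (\<lambda>(i, j). if i = j then h * (sinc_pt M h T i * (T - sinc_pt M h T i) / T) else 0)"

definition Iinv :: "nat \<Rightarrow> real mat" where
  "Iinv M = mat (2*M+1) (2*M+1) (\<lambda>(l, j). 1/2 + sinc_int (real_of_int (int l - int j)))"

definition Smat :: "nat \<Rightarrow> real \<Rightarrow> real mat" where
  "Smat M \<omega> = Iinv M - mat (2*M+1) (2*M+1) (\<lambda>_. \<omega> / 2)"

definition mat_inv :: "'a :: semiring_1 mat \<Rightarrow> 'a mat" where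
  "mat_inv A = (SOME B. B \<in> carrier_mat (dim_row A) (dim_row A) \<and> inverts_mat A B \<and> inverts_mat B A)"

definition alg_mult :: "'a :: field mat \<Rightarrow> 'a \<Rightarrow> nat" where
  "alg_mult A x = order x (char_poly A)"

end

theory Submission
  imports Defs
begin

(*
  Write I^(-1) = S(omega) + (omega/2) e e^T and note that S(omega) has skew-symmetric part
  (sinc_int is odd) and symmetric part ((1 - omega)/2) e e^T.  Diagonalising K reduces an
  eigenvector of the pencil (A, P(omega)) to a vector y and an eigenvalue -mu < 0 of K with
    (I + mu S D) y + mu (omega/2) (e^T D y) e = z (I + mu S D) y.
  Testing (I + mu S D) r against D r kills the skew part and leaves the positive quantity
  r^T D r + mu ((1 - omega)/2) (e^T D r)^2.  Hence I + mu S D is injective, so P(omega) is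
  nonsingular; and for z /= 1 the vector y is a multiple of the real solution r of
  (I + mu S D) r = e, with z = 1 + mu (omega/2) e^T D r and 0 < mu ((1 - omega)/2) e^T D r < 1,
  that is 1 < z < 1/(1 - omega).  Finally A - P(omega) = (e (x) K) (-(omega/2) e^T D (x) I_n)
  has rank at most n, so by Sylvester's determinant identity (x - 1)^(mn - n) divides the
  characteristic polynomial of P(omega)^(-1) A.
*)

section \<open>Kronecker products\<close>

lemma sum_lessThan_mult:
  fixes m n :: nat
  shows "(\<Sum>r<m*n. f r) = (\<Sum>j<m. \<Sum>k<n. f (j*n+k))"
proof -
  have "sum f {..<m*n} = (\<Sum>j<m. sum f {j*n..<j*n+n})"
    by (rule sum.nat_group[symmetric])
  also have "\<dots> = (\<Sum>j<m. \<Sum>k<n. f (j*n+k))"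
  proof (rule sum.cong[OF refl])
    fix j
    have "sum f {j*n..<j*n+n} = (\<Sum>k\<in>{0..<n}. f (k + j*n))"
      using sum.shift_bounds_nat_ivl[of f 0 "j*n" n] by (simp add: add.commute)
    then show "sum f {j*n..<j*n+n} = (\<Sum>k<n. f (j*n+k))"
      by (simp add: lessThan_atLeast0 add.commute)
  qed
  finally show ?thesis .
qed

lemma sum_mult_sum_swap:
  fixes w :: "'a \<Rightarrow> 'c::comm_semiring_0"
  shows "(\<Sum>k\<in>A. w k * (\<Sum>l\<in>B. c k l * x l)) = (\<Sum>l\<in>B. (\<Sum>k\<in>A. w k * c k l) * x l)"
  by (simp add: sum_distrib_left sum_distrib_right mult.assoc sum.swap[of _ A B])

lemma mult_add_less_mult:
  fixes i k m n :: nat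
  assumes "i < m" "k < n"
  shows "i*n + k < m*n"
proof -
  have "i*n + k < Suc i * n" using assms(2) by simp
  also have "\<dots> \<le> m*n" using assms(1) by (intro mult_le_mono1) simp
  finally show ?thesis .
qed

lemma div_mod_less_of_less_mult:
  fixes i a b :: nat
  assumes "i < a*b"
  shows "i div b < a" "i mod b < b"
  using assms by (auto simp: less_mult_imp_div_less intro!: mod_less_divisor gr0I)

lemma index_mult_mat_lessThan:
  assumes "A \<in> carrier_mat a b" "B \<in> carrier_mat b c" "i < a" "j < c"
  shows "(A * B) $$ (i,j) = (\<Sum>k<b. A $$ (i,k) * B $$ (k,j))"
  using assms by (simp add: scalar_prod_def lessThan_atLeast0)

lemma index_mult_mat_vec_lessThan:
  assumes "A \<in> carrier_mat a b" "v \<in> carrier_vec b" "i < a"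
  shows "(A *\<^sub>v v) $ i = (\<Sum>k<b. A $$ (i,k) * v $ k)"
  using assms by (simp add: scalar_prod_def lessThan_atLeast0)

lemma index_mult_diagonal_mat:
  assumes X: "X \<in> carrier_mat a m" and D: "D \<in> carrier_mat m m" and diag: "diagonal_mat D"
    and i: "i < a" and j: "j < m"
  shows "(X * D) $$ (i,j) = X $$ (i,j) * D $$ (j,j)"
proof -
  have "(X * D) $$ (i,j) = (\<Sum>k<m. X $$ (i,k) * D $$ (k,j))"
    by (rule index_mult_mat_lessThan[OF X D i j])
  also have "\<dots> = (\<Sum>k<m. if k = j then X $$ (i,j) * D $$ (j,j) else 0)"
    using D diag j unfolding diagonal_mat_def by (intro sum.cong refl) auto
  finally show ?thesis using j by simp
qed

lemma dim_kron [simp]: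
  "dim_row (kron A B) = dim_row A * dim_row B"
  "dim_col (kron A B) = dim_col A * dim_col B"
  by (simp_all add: kron_def)

lemma kron_carrier_mat:
  "A \<in> carrier_mat a b \<Longrightarrow> B \<in> carrier_mat c d \<Longrightarrow> kron A B \<in> carrier_mat (a*c) (b*d)"
  by (simp add: kron_def)

lemma index_kron:
  assumes "A \<in> carrier_mat a b" "B \<in> carrier_mat c d" "i < a" "k < c" "j < b" "l < d"
  shows "kron A B $$ (i*c+k, j*d+l) = A $$ (i,j) * B $$ (k,l)"
  using assms mult_add_less_mult[of i a k c] mult_add_less_mult[of j b l d]
  by (simp add: kron_def)

lemma index_kron_mult_vec:
  assumes R: "R \<in> carrier_mat a b" and K: "K \<in> carrier_mat c d" and v: "v \<in> carrier_vec (b*d)"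
    and i: "i < a" and k: "k < c"
  shows "(kron R K *\<^sub>v v) $ (i*c+k) = (\<Sum>j<b. R $$ (i,j) * (\<Sum>l<d. K $$ (k,l) * v $ (j*d+l)))"
proof -
  have "(kron R K *\<^sub>v v) $ (i*c+k) = (\<Sum>p<b*d. kron R K $$ (i*c+k, p) * v $ p)"
    using R K v mult_add_less_mult[OF i k] by (intro index_mult_mat_vec_lessThan) (auto intro: kron_carrier_mat)
  also have "\<dots> = (\<Sum>j<b. \<Sum>l<d. R $$ (i,j) * K $$ (k,l) * v $ (j*d+l))"
    unfolding sum_lessThan_mult using R K i k by (intro sum.cong refl) (simp add: index_kron)
  finally show ?thesis by (simp add: sum_distrib_left mult.assoc)
qed

lemma kron_mult:
  fixes A B C D :: "'a::comm_semiring_1 mat"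
  assumes A: "A \<in> carrier_mat a b" and B: "B \<in> carrier_mat c d"
    and C: "C \<in> carrier_mat b e" and D: "D \<in> carrier_mat d f"
  shows "kron A B * kron C D = kron (A * C) (B * D)"
proof (rule eq_matI)
  fix r s
  assume "r < dim_row (kron (A * C) (B * D))" "s < dim_col (kron (A * C) (B * D))"
  then have r: "r < a*c" and s: "s < e*f" using A B C D by auto
  note rc = div_mod_less_of_less_mult[OF r] and sf = div_mod_less_of_less_mult[OF s]
  have "(kron A B * kron C D) $$ (r,s) = (\<Sum>p<b*d. kron A B $$ (r,p) * kron C D $$ (p,s))"
    using A B C D r s by (intro index_mult_mat_lessThan) (auto intro: kron_carrier_mat)
  also have "\<dots> = (\<Sum>j<b. \<Sum>l<d. kron A B $$ (r, j*d+l) * kron C D $$ (j*d+l, s))"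
    by (rule sum_lessThan_mult)
  also have "\<dots> = (\<Sum>j<b. \<Sum>l<d. (A $$ (r div c, j) * C $$ (j, s div f))
                                  * (B $$ (r mod c, l) * D $$ (l, s mod f)))"
    using A B C D r s mult_add_less_mult[of _ b _ d]
    by (intro sum.cong refl) (simp add: kron_def mult_ac)
  also have "\<dots> = (A * C) $$ (r div c, s div f) * (B * D) $$ (r mod c, s mod f)"
    unfolding index_mult_mat_lessThan[OF A C rc(1) sf(1)] index_mult_mat_lessThan[OF B D rc(2) sf(2)]
    by (simp add: sum_product)
  also have "\<dots> = kron (A * C) (B * D) $$ (r,s)"
    using A B C D r s by (simp add: kron_def)
  finally show "(kron A B * kron C D) $$ (r,s) = kron (A * C) (B * D) $$ (r,s)" .
qed (use A B C D in auto)

lemma kron_diff_left: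
  fixes X Y :: "'a::ring mat"
  assumes X: "X \<in> carrier_mat a b" and Y: "Y \<in> carrier_mat a b"
  shows "kron (X - Y) K = kron X K - kron Y K"
proof (rule eq_matI)
  fix i j
  assume "i < dim_row (kron X K - kron Y K)" "j < dim_col (kron X K - kron Y K)"
  then have i: "i < a * dim_row K" and j: "j < b * dim_col K" using X Y by auto
  show "kron (X - Y) K $$ (i,j) = (kron X K - kron Y K) $$ (i,j)"
    using X Y i j div_mod_less_of_less_mult[OF i] div_mod_less_of_less_mult[OF j]
    by (simp add: kron_def left_diff_distrib)
qed (use X Y in auto)

lemma (in semiring_hom) kron_hom: "mat\<^sub>h (kron A B) = kron (mat\<^sub>h A) (mat\<^sub>h B)"
proof (rule eq_matI)
  fix i j
  assume "i < dim_row (kron (mat\<^sub>h A) (mat\<^sub>h B))" "j < dim_col (kron (mat\<^sub>h A) (mat\<^sub>h B))"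
  then have i: "i < dim_row A * dim_row B" and j: "j < dim_col A * dim_col B" by auto
  note ij = div_mod_less_of_less_mult[OF i] div_mod_less_of_less_mult[OF j]
  have "mat\<^sub>h (kron A B) $$ (i,j)
      = hom (A $$ (i div dim_row B, j div dim_col B) * B $$ (i mod dim_row B, j mod dim_col B))"
    using i j by (simp add: kron_def)
  also have "\<dots> = kron (mat\<^sub>h A) (mat\<^sub>h B) $$ (i,j)"
    using i j ij by (simp only: hom_mult kron_def index_mat index_map_mat) simp
  finally show "mat\<^sub>h (kron A B) $$ (i,j) = kron (mat\<^sub>h A) (mat\<^sub>h B) $$ (i,j)" .
qed auto

lemma of_real_one_minus_kron:
  fixes X K :: "real mat"
  assumes X: "X \<in> carrier_mat m m" and K: "K \<in> carrier_mat n n"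
  shows "map_mat complex_of_real (1\<^sub>m (m*n) - kron X K)
       = 1\<^sub>m (m*n) - kron (map_mat complex_of_real X) (map_mat complex_of_real K)"
  using kron_carrier_mat[OF X K] X K
  by (intro eq_matI) (auto simp flip: of_real_hom.kron_hom)

lemma (in semiring_hom) similar_mat_hom:
  assumes "similar_mat A B"
  shows "similar_mat (mat\<^sub>h A) (mat\<^sub>h B)"
proof -
  obtain n P Q where carr: "{A, B, P, Q} \<subseteq> carrier_mat n n"
    and PQ: "P * Q = 1\<^sub>m n" and QP: "Q * P = 1\<^sub>m n" and A: "A = P * B * Q"
    using similar_matD[OF assms] by blast
  have B: "B \<in> carrier_mat n n" and P: "P \<in> carrier_mat n n" and Q: "Q \<in> carrier_mat n n"
    using carr by auto
  show ?thesis
  proof (rule similar_matI)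
    show "{mat\<^sub>h A, mat\<^sub>h B, mat\<^sub>h P, mat\<^sub>h Q} \<subseteq> carrier_mat n n"
      using carr by auto
    show "mat\<^sub>h P * mat\<^sub>h Q = 1\<^sub>m n" "mat\<^sub>h Q * mat\<^sub>h P = 1\<^sub>m n"
      by (simp_all add: mat_hom_mult[OF P Q, symmetric] mat_hom_mult[OF Q P, symmetric] PQ QP mat_hom_one)
    show "mat\<^sub>h A = mat\<^sub>h P * mat\<^sub>h B * mat\<^sub>h Q"
      unfolding A mat_hom_mult[OF mult_carrier_mat[OF P B] Q] mat_hom_mult[OF P B] ..
  qed
qed

lemma (in semiring_hom) diagonal_mat_hom: "diagonal_mat A \<Longrightarrow> diagonal_mat (mat\<^sub>h A)"
  by (simp add: diagonal_mat_def)

section \<open>Kronecker pencils with a diagonalizable factor\<close>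

(* kron_contract n w v is the vector (I_m \<otimes> w\<^sup>T) v, as a function of the block index. *)
definition kron_contract :: "nat \<Rightarrow> (nat \<Rightarrow> 'a::semiring_0) \<Rightarrow> 'a vec \<Rightarrow> nat \<Rightarrow> 'a" where
  "kron_contract n w v j = (\<Sum>k<n. w k * v $ (j*n+k))"

lemma kron_contract_pencil:
  fixes R K :: "'a::comm_ring_1 mat"
  assumes R: "R \<in> carrier_mat m m" and K: "K \<in> carrier_mat n n"
    and v: "v \<in> carrier_vec (m*n)" and i: "i < m"
    and left_eigen: "\<And>l. l < n \<Longrightarrow> (\<Sum>k<n. w k * K $$ (k,l)) = \<theta> * w l"
  shows "kron_contract n w ((1\<^sub>m (m*n) - kron R K) *\<^sub>v v) i
       = kron_contract n w v i - \<theta> * (\<Sum>j<m. R $$ (i,j) * kron_contract n w v j)"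
proof -
  have RK: "kron R K \<in> carrier_mat (m*n) (m*n)" using R K by (rule kron_carrier_mat)
  have entry: "((1\<^sub>m (m*n) - kron R K) *\<^sub>v v) $ (i*n+k)
             = v $ (i*n+k) - (\<Sum>j<m. R $$ (i,j) * (\<Sum>l<n. K $$ (k,l) * v $ (j*n+l)))"
    if "k < n" for k
    using R K RK v mult_add_less_mult[OF i that] index_kron_mult_vec[OF R K v i that]
    by (simp add: minus_mult_distrib_mat_vec[OF one_carrier_mat RK v])
  have "(\<Sum>k<n. w k * (\<Sum>j<m. R $$ (i,j) * (\<Sum>l<n. K $$ (k,l) * v $ (j*n+l))))
      = (\<Sum>j<m. R $$ (i,j) * (\<Sum>k<n. w k * (\<Sum>l<n. K $$ (k,l) * v $ (j*n+l))))"
    by (simp add: sum_distrib_left mult_ac sum.swap[of _ "{..<n}" "{..<m}"])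
  also have "\<dots> = (\<Sum>j<m. R $$ (i,j) * (\<Sum>l<n. (\<Sum>k<n. w k * K $$ (k,l)) * v $ (j*n+l)))"
    by (simp only: sum_mult_sum_swap)
  also have "\<dots> = \<theta> * (\<Sum>j<m. R $$ (i,j) * kron_contract n w v j)"
    by (simp add: left_eigen kron_contract_def sum_distrib_left mult_ac)
  finally show ?thesis
    by (simp add: kron_contract_def entry right_diff_distrib sum_subtractf)
qed

lemma kron_contract_rows_nonzero:
  fixes V W :: "'a::comm_semiring_1 mat"
  assumes V: "V \<in> carrier_mat n n" and W: "W \<in> carrier_mat n n" and VW: "V * W = 1\<^sub>m n"
    and v: "v \<in> carrier_vec (m*n)" and v0: "v \<noteq> 0\<^sub>v (m*n)"
  shows "\<exists>l<n. \<exists>j<m. kron_contract n (\<lambda>k. W $$ (l,k)) v j \<noteq> 0"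
proof -
  obtain p where p: "p < m*n" "v $ p \<noteq> 0" using v v0 by (auto simp: vec_eq_iff)
  define j k where "j = p div n" and "k = p mod n"
  have j: "j < m" and k: "k < n" and p_eq: "p = j*n + k"
    using div_mod_less_of_less_mult[OF p(1)] by (simp_all add: j_def k_def)
  have "v $ p = (\<Sum>k'<n. if k' = k then v $ (j*n+k') else 0)"
    using k by (simp add: p_eq)
  also have "\<dots> = (\<Sum>k'<n. (V * W) $$ (k,k') * v $ (j*n+k'))"
    using k by (intro sum.cong refl) (simp add: VW)
  also have "\<dots> = (\<Sum>k'<n. \<Sum>l<n. V $$ (k,l) * (W $$ (l,k') * v $ (j*n+k')))"
    using k by (intro sum.cong refl)
      (simp add: index_mult_mat_lessThan[OF V W] sum_distrib_right mult.assoc del: index_mult_mat)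
  also have "\<dots> = (\<Sum>l<n. V $$ (k,l) * kron_contract n (\<lambda>k'. W $$ (l,k')) v j)"
    unfolding kron_contract_def sum_distrib_left by (rule sum.swap)
  finally show ?thesis using p(2) j by (metis (no_types, lifting) mult_zero_right sum.neutral lessThan_iff)
qed

lemma similar_mat_wit_diagonal_left_eigen:
  fixes K \<Lambda> :: "'a::semiring_1 mat"
  assumes wit: "similar_mat_wit K \<Lambda> V W" and K: "K \<in> carrier_mat n n" and diag: "diagonal_mat \<Lambda>"
    and l: "l < n" and l': "l' < n"
  shows "(\<Sum>k<n. W $$ (l,k) * K $$ (k,l')) = \<Lambda> $$ (l,l) * W $$ (l,l')"
proof -
  have V: "V \<in> carrier_mat n n" and W: "W \<in> carrier_mat n n" and L: "\<Lambda> \<in> carrier_mat n n"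
    and WV: "W * V = 1\<^sub>m n" and KV: "K = V * \<Lambda> * W"
    using wit K unfolding similar_mat_wit_def Let_def by auto
  have "W * K = (W * V) * \<Lambda> * W"
    using V W L by (simp add: KV assoc_mult_mat[of _ n n _ n _ n])
  then have WK: "W * K = \<Lambda> * W"
    using L by (simp add: WV)
  have "(\<Sum>k<n. W $$ (l,k) * K $$ (k,l')) = (\<Lambda> * W) $$ (l,l')"
    unfolding WK[symmetric] by (rule index_mult_mat_lessThan[OF W K l l', symmetric])
  also have "\<dots> = (\<Sum>k<n. \<Lambda> $$ (l,k) * W $$ (k,l'))"
    by (rule index_mult_mat_lessThan[OF L W l l'])
  also have "\<dots> = (\<Sum>k<n. if k = l then \<Lambda> $$ (l,l) * W $$ (l,l') else 0)"
    using diag L l unfolding diagonal_mat_def by (intro sum.cong refl) auto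
  finally show ?thesis using l by simp
qed

(* Contracting with the rows of W, which are left eigenvectors of K = V \<Lambda> W, splits the
   pencil into n pencils of size m. *)
lemma kron_pencil_eigenvector:
  fixes R1 R2 K \<Lambda> :: "'a::comm_ring_1 mat"
  assumes R1: "R1 \<in> carrier_mat m m" and R2: "R2 \<in> carrier_mat m m"
    and K: "K \<in> carrier_mat n n" and sim: "similar_mat K \<Lambda>" and diag: "diagonal_mat \<Lambda>"
    and v: "v \<in> carrier_vec (m*n)" and v0: "v \<noteq> 0\<^sub>v (m*n)"
    and eq: "(1\<^sub>m (m*n) - kron R1 K) *\<^sub>v v = z \<cdot>\<^sub>v ((1\<^sub>m (m*n) - kron R2 K) *\<^sub>v v)"
  shows "\<exists>l<n. \<exists>y. (\<exists>j<m. y j \<noteq> 0) \<and>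
           (\<forall>i<m. y i - \<Lambda> $$ (l,l) * (\<Sum>j<m. R1 $$ (i,j) * y j)
                = z * (y i - \<Lambda> $$ (l,l) * (\<Sum>j<m. R2 $$ (i,j) * y j)))"
proof -
  obtain V W where wit: "similar_mat_wit K \<Lambda> V W" using sim unfolding similar_mat_def by blast
  then have V: "V \<in> carrier_mat n n" and W: "W \<in> carrier_mat n n" and VW: "V * W = 1\<^sub>m n"
    using K unfolding similar_mat_wit_def Let_def by auto
  note left_eigen = similar_mat_wit_diagonal_left_eigen[OF wit K diag]
  obtain l j0 where l: "l < n" and j0: "j0 < m" and nz: "kron_contract n (\<lambda>k. W $$ (l,k)) v j0 \<noteq> 0"
    using kron_contract_rows_nonzero[OF V W VW v v0] by blast
  define y where "y = kron_contract n (\<lambda>k. W $$ (l,k)) v"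
  have "y i - \<Lambda> $$ (l,l) * (\<Sum>j<m. R1 $$ (i,j) * y j)
      = z * (y i - \<Lambda> $$ (l,l) * (\<Sum>j<m. R2 $$ (i,j) * y j))" if i: "i < m" for i
  proof -
    have "kron_contract n (\<lambda>k. W $$ (l,k)) ((1\<^sub>m (m*n) - kron R1 K) *\<^sub>v v) i
        = z * kron_contract n (\<lambda>k. W $$ (l,k)) ((1\<^sub>m (m*n) - kron R2 K) *\<^sub>v v) i"
      unfolding eq kron_contract_def sum_distrib_left using R2 K mult_add_less_mult[OF i, of _ n]
      by (intro sum.cong refl) (simp add: mult_ac)
    then show ?thesis
      unfolding y_def
      by (simp add: kron_contract_pencil[OF R1 K v i left_eigen[OF l]]
          kron_contract_pencil[OF R2 K v i left_eigen[OF l]])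
  qed
  then show ?thesis using l j0 nz unfolding y_def by blast
qed

lemma kron_pencil_diagonalizable_eigenvector:
  fixes X1 X2 D K \<Lambda> :: "real mat" and v :: "complex vec"
  assumes X1: "X1 \<in> carrier_mat m m" and X2: "X2 \<in> carrier_mat m m"
    and D: "D \<in> carrier_mat m m" and diag_D: "diagonal_mat D"
    and K: "K \<in> carrier_mat n n" and sim: "similar_mat K \<Lambda>" and diag: "diagonal_mat \<Lambda>"
    and neg: "\<forall>l<n. \<Lambda> $$ (l,l) < 0"
    and v: "v \<in> carrier_vec (m*n)" "v \<noteq> 0\<^sub>v (m*n)"
    and eq: "map_mat complex_of_real (1\<^sub>m (m*n) - kron (X1 * D) K) *\<^sub>v v
           = z \<cdot>\<^sub>v (map_mat complex_of_real (1\<^sub>m (m*n) - kron (X2 * D) K) *\<^sub>v v)"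
  shows "\<exists>\<mu>>0. \<exists>y. (\<exists>j<m. y j \<noteq> 0) \<and>
          (\<forall>i<m. y i + of_real \<mu> * (\<Sum>j<m. of_real (X1 $$ (i,j) * D $$ (j,j)) * y j)
               = z * (y i + of_real \<mu> * (\<Sum>j<m. of_real (X2 $$ (i,j) * D $$ (j,j)) * y j)))"
proof -
  let ?h = "map_mat complex_of_real"
  have XD: "X1 * D \<in> carrier_mat m m" "X2 * D \<in> carrier_mat m m" using X1 X2 D by auto
  obtain l y where l: "l < n" and y0: "\<exists>j<m. y j \<noteq> 0"
    and y: "\<forall>i<m. y i - ?h \<Lambda> $$ (l,l) * (\<Sum>j<m. ?h (X1 * D) $$ (i,j) * y j)
                = z * (y i - ?h \<Lambda> $$ (l,l) * (\<Sum>j<m. ?h (X2 * D) $$ (i,j) * y j))"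
    using kron_pencil_eigenvector[of "?h (X1 * D)" m "?h (X2 * D)" "?h K" n "?h \<Lambda>" v z]
      XD K v eq of_real_hom.similar_mat_hom[OF sim] of_real_hom.diagonal_mat_hom[OF diag]
    by (auto simp: of_real_one_minus_kron)
  have L: "\<Lambda> \<in> carrier_mat n n" using similar_matD[OF sim] K by auto
  have entry: "?h (X * D) $$ (i,j) = of_real (X $$ (i,j) * D $$ (j,j))"
    if "X \<in> carrier_mat m m" "i < m" "j < m" for X i j
  proof -
    have "?h (X * D) $$ (i,j) = of_real ((X * D) $$ (i,j))"
      by (rule index_map_mat(1)) (use that D in auto)
    also have "\<dots> = of_real (X $$ (i,j) * D $$ (j,j))"
      by (simp only: index_mult_diagonal_mat[OF that(1) D diag_D that(2,3)])
    finally show ?thesis .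
  qed
  have "0 < - \<Lambda> $$ (l,l)" using neg l by simp
  moreover have "\<forall>i<m. y i + of_real (- \<Lambda> $$ (l,l)) * (\<Sum>j<m. of_real (X1 $$ (i,j) * D $$ (j,j)) * y j)
      = z * (y i + of_real (- \<Lambda> $$ (l,l)) * (\<Sum>j<m. of_real (X2 $$ (i,j) * D $$ (j,j)) * y j))"
    using y L l X1 X2 by (simp add: entry)
  ultimately show ?thesis using y0 by blast
qed

section \<open>Low-rank perturbations of the identity\<close>

(* Both sides are det [x I_N, G; H, I_n] times det of a block-triangular factor. *)
lemma det_sylvester:
  fixes G H :: "'a::idom mat" and x :: 'a
  assumes G: "G \<in> carrier_mat N n" and H: "H \<in> carrier_mat n N"
  shows "x^n * det (x \<cdot>\<^sub>m 1\<^sub>m N - G * H) = x^N * det (x \<cdot>\<^sub>m 1\<^sub>m n - H * G)"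
proof -
  define B where "B = four_block_mat (x \<cdot>\<^sub>m 1\<^sub>m N) G H (1\<^sub>m n)"
  define L1 where "L1 = four_block_mat (1\<^sub>m N) (0\<^sub>m N n) (- H) (1\<^sub>m n)"
  define L2 where "L2 = four_block_mat (1\<^sub>m N) (0\<^sub>m N n) (- H) (x \<cdot>\<^sub>m 1\<^sub>m n)"
  have carr: "B \<in> carrier_mat (N+n) (N+n)" "L1 \<in> carrier_mat (N+n) (N+n)" "L2 \<in> carrier_mat (N+n) (N+n)"
    unfolding B_def L1_def L2_def using G H by auto
  have BL1: "B * L1 = four_block_mat (x \<cdot>\<^sub>m 1\<^sub>m N - G * H) G (0\<^sub>m n N) (1\<^sub>m n)"
    unfolding B_def L1_def
    by (subst mult_four_block_mat[where ?nr1.0=N and ?n1.0=N and ?n2.0=n and ?nr2.0=n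
          and ?nc1.0=N and ?nc2.0=n]) (use G H in \<open>auto intro!: cong_four_block_mat\<close>)
  have "det (B * L1) = det (x \<cdot>\<^sub>m 1\<^sub>m N - G * H)"
    unfolding BL1 by (subst det_four_block_mat_lower_left_zero[of _ N _ n]) (use G H in auto)
  moreover have "det L1 = 1"
    unfolding L1_def by (subst det_four_block_mat_upper_right_zero[of _ N _ n]) (use H in auto)
  ultimately have det_B: "det B = det (x \<cdot>\<^sub>m 1\<^sub>m N - G * H)"
    using det_mult[OF carr(1,2)] by simp
  have "H * (x \<cdot>\<^sub>m 1\<^sub>m N) = x \<cdot>\<^sub>m H" "x \<cdot>\<^sub>m 1\<^sub>m n * H = x \<cdot>\<^sub>m H"
    using mult_smult_distrib[OF H one_carrier_mat, of x] mult_smult_assoc_mat[OF one_carrier_mat H, of x] H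
    by simp_all
  then have L2B: "L2 * B = four_block_mat (x \<cdot>\<^sub>m 1\<^sub>m N) G (0\<^sub>m n N) (x \<cdot>\<^sub>m 1\<^sub>m n - H * G)"
    unfolding B_def L2_def
    by (subst mult_four_block_mat[where ?nr1.0=N and ?n1.0=N and ?n2.0=n and ?nr2.0=n
          and ?nc1.0=N and ?nc2.0=n]) (use G H in \<open>auto intro!: cong_four_block_mat\<close>)
  have "det (L2 * B) = x^N * det (x \<cdot>\<^sub>m 1\<^sub>m n - H * G)"
    unfolding L2B by (subst det_four_block_mat_lower_left_zero[of _ N _ n]) (use G H in auto)
  moreover have "det L2 = x^n"
    unfolding L2_def by (subst det_four_block_mat_upper_right_zero[of _ N _ n]) (use H in auto)
  ultimately show ?thesis
    using det_mult[OF carr(3,1)] det_B by simp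
qed

lemma sum_order_le_degree:
  fixes p :: "'a::idom poly"
  assumes "p \<noteq> 0"
  shows "(\<Sum>z\<in>A. order z p) \<le> degree p"
proof (cases "finite A")
  case True
  have "(\<Sum>z\<in>A. order z p) = (\<Sum>z\<in>A. count (proots p) z)"
    using assms by simp
  also have "\<dots> = (\<Sum>z\<in>A \<inter> set_mset (proots p). count (proots p) z)"
    using True by (intro sum.mono_neutral_right) auto
  also have "\<dots> \<le> (\<Sum>z\<in>set_mset (proots p). count (proots p) z)"
    by (intro sum_mono2) auto
  also have "\<dots> = size (proots p)"
    by (simp add: size_multiset_overloaded_eq)
  also have "\<dots> \<le> degree p"
    by (rule size_proots_le)
  finally show ?thesis .
qed simp

lemma order_one_char_poly_low_rank_update:
  fixes C G H :: "'a::field mat"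
  assumes G: "G \<in> carrier_mat N n" and H: "H \<in> carrier_mat n N" and C: "C = 1\<^sub>m N + G * H"
  shows "N - n \<le> order 1 (char_poly C)"
proof -
  define Gp where "Gp = map_mat (\<lambda>a. [:a:]) G"
  define Hp where "Hp = map_mat (\<lambda>a. [:a:]) H"
  have Gp: "Gp \<in> carrier_mat N n" and Hp: "Hp \<in> carrier_mat n N"
    using G H by (auto simp: Gp_def Hp_def)
  let ?y = "[:-1, 1:] :: 'a poly"
  have "char_poly_matrix C = ?y \<cdot>\<^sub>m 1\<^sub>m N - Gp * Hp"
  proof (rule eq_matI)
    fix i j assume "i < dim_row (?y \<cdot>\<^sub>m 1\<^sub>m N - Gp * Hp)" "j < dim_col (?y \<cdot>\<^sub>m 1\<^sub>m N - Gp * Hp)"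
    then have i: "i < N" and j: "j < N" using Gp Hp by auto
    have "(Gp * Hp) $$ (i,j) = [:(G * H) $$ (i,j):]"
      using i j G H by (simp add: Gp_def Hp_def scalar_prod_def mult_to_poly sum_to_poly mult.commute)
    moreover have "pCons (-1 - c) 1 = pCons 0 1 - 1 - [:c:]" for c :: 'a
      by (simp add: poly_eq_iff coeff_pCons split: nat.split)
    ultimately show "char_poly_matrix C $$ (i,j) = (?y \<cdot>\<^sub>m 1\<^sub>m N - Gp * Hp) $$ (i,j)"
      using i j G H Gp Hp unfolding C char_poly_matrix_def by simp
  qed (use G H Gp Hp in \<open>auto simp: C char_poly_matrix_def\<close>)
  then have sylvester: "?y^n * char_poly C = ?y^N * det (?y \<cdot>\<^sub>m 1\<^sub>m n - Hp * Gp)"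
    unfolding char_poly_def by (simp add: det_sylvester[OF Gp Hp])
  have "char_poly C \<noteq> 0"
    using degree_monic_char_poly[of C N] G H C by auto
  show ?thesis
  proof (cases "N \<le> n")
    case False
    then have "?y^n * ?y^(N-n) dvd ?y^n * char_poly C"
      using sylvester by (metis dvd_triv_left le_add_diff_inverse nat_le_linear power_add)
    then have "?y^(N-n) dvd char_poly C"
      by (subst (asm) dvd_mult_cancel_left) auto
    then show ?thesis using \<open>char_poly C \<noteq> 0\<close> order_divides[of 1 "N-n" "char_poly C"] by simp
  qed simp
qed

lemma sum_alg_mult_ne_one_low_rank_update:
  fixes C G H :: "'a::field mat"
  assumes G: "G \<in> carrier_mat N n" and H: "H \<in> carrier_mat n N" and C: "C = 1\<^sub>m N + G * H"
  shows "(\<Sum>z\<in>{z. eigenvalue C z \<and> z \<noteq> 1}. alg_mult C z) \<le> n"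
proof -
  have CN: "C \<in> carrier_mat N N" using G H C by auto
  have deg: "degree (char_poly C) = N" and nz: "char_poly C \<noteq> 0"
    using degree_monic_char_poly[OF CN] by auto
  let ?B = "{z. eigenvalue C z \<and> z \<noteq> 1}"
  show ?thesis
  proof (cases "finite ?B")
    case True
    have "order 1 (char_poly C) + (\<Sum>z\<in>?B. order z (char_poly C)) \<le> N"
      using sum_order_le_degree[OF nz, of "insert 1 ?B"] True deg by simp
    then show ?thesis
      using order_one_char_poly_low_rank_update[OF G H C] unfolding alg_mult_def by linarith
  qed simp
qed

lemma invertible_mat_if_det_nonzero:
  fixes A :: "'a::field mat"
  assumes A: "A \<in> carrier_mat n n" and det: "det A \<noteq> 0"
  shows "invertible_mat A"
proof -
  have "A \<in> Units (ring_mat TYPE('a) n undefined)"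
    by (rule det_non_zero_imp_unit[OF A det])
  then obtain B where "B \<in> carrier_mat n n" "A * B = 1\<^sub>m n" "B * A = 1\<^sub>m n"
    unfolding Units_def ring_mat_def by auto
  then show ?thesis
    using A unfolding invertible_mat_def inverts_mat_def by (auto intro!: exI[of _ B])
qed

lemma mat_inv_inverse:
  assumes inv: "invertible_mat A" and A: "A \<in> carrier_mat n n"
  shows "mat_inv A \<in> carrier_mat n n" "A * mat_inv A = 1\<^sub>m n" "mat_inv A * A = 1\<^sub>m n"
proof -
  obtain B where "inverts_mat A B" "inverts_mat B A"
    using inv unfolding invertible_mat_def by blast
  then have "B \<in> carrier_mat (dim_row A) (dim_row A) \<and> inverts_mat A B \<and> inverts_mat B A"
    using A unfolding inverts_mat_def
    by (metis carrier_matD carrier_matI index_mult_mat(2,3) index_one_mat(2,3))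
  from someI[of "\<lambda>B. B \<in> carrier_mat (dim_row A) (dim_row A) \<and> inverts_mat A B \<and> inverts_mat B A", OF this]
  show "mat_inv A \<in> carrier_mat n n" "A * mat_inv A = 1\<^sub>m n" "mat_inv A * A = 1\<^sub>m n"
    using A unfolding mat_inv_def inverts_mat_def by auto
qed

lemma eigenvalue_of_real_inverse_mult:
  fixes P B A :: "real mat"
  assumes P: "P \<in> carrier_mat N N" and B: "B \<in> carrier_mat N N" and A: "A \<in> carrier_mat N N"
    and PB: "P * B = 1\<^sub>m N" and eig: "eigenvalue (map_mat complex_of_real (B * A)) z"
  obtains v where "v \<in> carrier_vec N" "v \<noteq> 0\<^sub>v N"
    "map_mat complex_of_real A *\<^sub>v v = z \<cdot>\<^sub>v (map_mat complex_of_real P *\<^sub>v v)"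
proof -
  let ?h = "map_mat complex_of_real"
  have BA: "B * A \<in> carrier_mat N N" using B A by simp
  obtain v where v: "v \<in> carrier_vec N" "v \<noteq> 0\<^sub>v N" and BAv: "?h (B * A) *\<^sub>v v = z \<cdot>\<^sub>v v"
    using eig BA unfolding eigenvalue_def eigenvector_def by auto
  have "?h A = ?h P * ?h (B * A)"
    using P B A by (simp add: assoc_mult_mat[of P N N B N A N, symmetric] PB
        of_real_hom.mat_hom_mult[OF P BA, symmetric])
  then have "?h A *\<^sub>v v = ?h P *\<^sub>v (?h (B * A) *\<^sub>v v)"
    using P BA v by simp
  also have "\<dots> = z \<cdot>\<^sub>v (?h P *\<^sub>v v)"
    using P v by (simp add: BAv mult_mat_vec)
  finally show ?thesis using v that by blast
qed

lemma alg_mult_preconditioned_low_rank_update: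
  fixes P B G H :: "real mat"
  assumes P: "P \<in> carrier_mat N N" and B: "B \<in> carrier_mat N N" and BP: "B * P = 1\<^sub>m N"
    and G: "G \<in> carrier_mat N n" and H: "H \<in> carrier_mat n N"
  shows "(\<Sum>z\<in>{z. eigenvalue (map_mat complex_of_real (B * (P + G * H))) z \<and> z \<noteq> 1}.
            alg_mult (map_mat complex_of_real (B * (P + G * H))) z) \<le> n"
proof (rule sum_alg_mult_ne_one_low_rank_update)
  have BG: "B * G \<in> carrier_mat N n" using B G by simp
  have "B * (P + G * H) = 1\<^sub>m N + (B * G) * H"
    using P B G H by (simp add: mult_add_distrib_mat[OF B P] BP assoc_mult_mat[of B N N G n H N])
  then have "map_mat complex_of_real (B * (P + G * H)) = 1\<^sub>m N + map_mat complex_of_real ((B * G) * H)"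
    using BG H by (intro eq_matI) auto
  then show "map_mat complex_of_real (B * (P + G * H))
           = 1\<^sub>m N + map_mat complex_of_real (B * G) * map_mat complex_of_real H"
    by (simp add: of_real_hom.mat_hom_mult[OF BG H])
qed (use B G H in auto)

section \<open>Pencils whose symmetric part has rank one\<close>

(* The hypothesis on s says that S = (s i j) is skew-symmetric up to \<beta> e e\<^sup>T; testing the
   system against u = D r kills the skew part. *)
lemma skew_quadratic_identity:
  fixes r d :: "nat \<Rightarrow> real" and s :: "nat \<Rightarrow> nat \<Rightarrow> real"
  assumes sym: "\<And>i j. i < m \<Longrightarrow> j < m \<Longrightarrow> s i j + s j i = 2 * \<beta>"
    and eq: "\<And>i. i < m \<Longrightarrow> r i + \<mu> * (\<Sum>j<m. s i j * d j * r j) = c"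
  shows "(\<Sum>i<m. d i * (r i)\<^sup>2) + \<mu> * \<beta> * (\<Sum>i<m. d i * r i)\<^sup>2 = c * (\<Sum>i<m. d i * r i)"
proof -
  define u where "u i = d i * r i" for i
  define q where "q = (\<Sum>i<m. \<Sum>j<m. u i * u j * s i j)"
  have "q = (\<Sum>i<m. \<Sum>j<m. u i * u j * s j i)"
    unfolding q_def by (subst sum.swap) (simp add: mult_ac)
  then have "2 * q = (\<Sum>i<m. \<Sum>j<m. u i * u j * (s i j + s j i))"
    by (simp add: q_def distrib_left sum.distrib)
  also have "\<dots> = 2 * \<beta> * (\<Sum>i<m. u i)\<^sup>2"
    using sym by (simp add: power2_eq_square sum_distrib_left sum_distrib_right mult_ac)
  finally have q: "q = \<beta> * (\<Sum>i<m. u i)\<^sup>2" by simp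
  have "c * (\<Sum>i<m. u i) = (\<Sum>i<m. u i * (r i + \<mu> * (\<Sum>j<m. s i j * d j * r j)))"
    using eq by (simp add: sum_distrib_left mult.commute)
  also have "\<dots> = (\<Sum>i<m. d i * (r i)\<^sup>2) + \<mu> * q"
    by (simp add: q_def u_def distrib_left sum.distrib sum_distrib_left power2_eq_square mult_ac)
  finally show ?thesis
    using q by (simp add: u_def)
qed

lemma skew_pencil_injective_real:
  fixes r d :: "nat \<Rightarrow> real" and s :: "nat \<Rightarrow> nat \<Rightarrow> real"
  assumes sym: "\<And>i j. i < m \<Longrightarrow> j < m \<Longrightarrow> s i j + s j i = 2 * \<beta>"
    and d: "\<And>j. j < m \<Longrightarrow> 0 < d j" and "0 \<le> \<mu>" "0 \<le> \<beta>"
    and eq: "\<And>i. i < m \<Longrightarrow> r i + \<mu> * (\<Sum>j<m. s i j * d j * r j) = 0"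
    and i: "i < m"
  shows "r i = 0"
proof -
  have nonneg: "0 \<le> d j * (r j)\<^sup>2" if "j \<in> {..<m}" for j
    using d that by (simp add: less_imp_le)
  have "(\<Sum>j<m. d j * (r j)\<^sup>2) + \<mu> * \<beta> * (\<Sum>j<m. d j * r j)\<^sup>2 = 0"
    using skew_quadratic_identity[OF sym eq] by simp
  moreover have "0 \<le> \<mu> * \<beta> * (\<Sum>j<m. d j * r j)\<^sup>2"
    using assms by simp
  moreover have "0 \<le> (\<Sum>j<m. d j * (r j)\<^sup>2)"
    using nonneg by (rule sum_nonneg)
  ultimately have "(\<Sum>j<m. d j * (r j)\<^sup>2) = 0"
    by linarith
  then have "d i * (r i)\<^sup>2 = 0"
    using sum_nonneg_eq_0_iff[of "{..<m}" "\<lambda>j. d j * (r j)\<^sup>2"] nonneg i by simp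
  then show ?thesis
    using d[OF i] by simp
qed

lemma skew_pencil_injective:
  fixes y :: "nat \<Rightarrow> complex" and d :: "nat \<Rightarrow> real" and s :: "nat \<Rightarrow> nat \<Rightarrow> real"
  assumes sym: "\<And>i j. i < m \<Longrightarrow> j < m \<Longrightarrow> s i j + s j i = 2 * \<beta>"
    and d: "\<And>j. j < m \<Longrightarrow> 0 < d j" and \<mu>: "0 \<le> \<mu>" and \<beta>: "0 \<le> \<beta>"
    and eq: "\<And>i. i < m \<Longrightarrow> y i + of_real \<mu> * (\<Sum>j<m. of_real (s i j * d j) * y j) = 0"
    and i: "i < m"
  shows "y i = 0"
proof -
  have "Re (y i) + \<mu> * (\<Sum>j<m. s i j * d j * Re (y j)) = 0"
    and "Im (y i) + \<mu> * (\<Sum>j<m. s i j * d j * Im (y j)) = 0" if "i < m" for i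
    using arg_cong[OF eq[OF that], of Re] arg_cong[OF eq[OF that], of Im] by simp_all
  then show ?thesis
    using skew_pencil_injective_real[OF sym d \<mu> \<beta> _ i, where r="\<lambda>j. Re (y j)"]
      skew_pencil_injective_real[OF sym d \<mu> \<beta> _ i, where r="\<lambda>j. Im (y j)"]
    by (simp add: complex_eq_iff)
qed

lemma skew_pencil_unit_rhs_bounds:
  fixes r d :: "nat \<Rightarrow> real" and s :: "nat \<Rightarrow> nat \<Rightarrow> real"
  assumes sym: "\<And>i j. i < m \<Longrightarrow> j < m \<Longrightarrow> s i j + s j i = 2 * \<beta>"
    and d: "\<And>j. j < m \<Longrightarrow> 0 < d j" and \<mu>: "0 \<le> \<mu>" and \<beta>: "0 \<le> \<beta>" and m: "0 < m"
    and eq: "\<And>i. i < m \<Longrightarrow> r i + \<mu> * (\<Sum>j<m. s i j * d j * r j) = 1"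
  shows "0 < (\<Sum>j<m. d j * r j)" and "\<mu> * \<beta> * (\<Sum>j<m. d j * r j) < 1"
proof -
  define t where "t = (\<Sum>j<m. d j * r j)"
  have "\<exists>i<m. r i \<noteq> 0"
  proof (rule ccontr)
    assume "\<not> (\<exists>i<m. r i \<noteq> 0)"
    then show False using eq[OF m] m by simp
  qed
  then obtain i where i: "i < m" "r i \<noteq> 0" by blast
  have "0 \<le> d j * (r j)\<^sup>2" if "j \<in> {..<m}" for j
    using d that by (simp add: less_imp_le)
  then have "0 < (\<Sum>j<m. d j * (r j)\<^sup>2)"
    using i d[OF i(1)] by (intro sum_pos2[of _ i]) auto
  moreover have "(\<Sum>j<m. d j * (r j)\<^sup>2) + \<mu> * \<beta> * t\<^sup>2 = t"
    using skew_quadratic_identity[OF sym eq] by (simp add: t_def)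
  moreover have "0 \<le> \<mu> * \<beta> * t\<^sup>2"
    using \<mu> \<beta> by simp
  ultimately have t: "0 < t" and "\<mu> * \<beta> * t\<^sup>2 < t"
    by linarith+
  then have "(\<mu> * \<beta> * t - 1) * t < 0"
    by (simp add: algebra_simps power2_eq_square)
  with t show "0 < t" "\<mu> * \<beta> * t < 1"
    by (simp_all add: mult_less_0_iff)
qed

lemma skew_pencil_constant_rhs:
  fixes y :: "nat \<Rightarrow> complex" and d :: "nat \<Rightarrow> real" and s :: "nat \<Rightarrow> nat \<Rightarrow> real"
  assumes sym: "\<And>i j. i < m \<Longrightarrow> j < m \<Longrightarrow> s i j + s j i = 2 * \<beta>"
    and d: "\<And>j. j < m \<Longrightarrow> 0 < d j" and \<mu>: "0 \<le> \<mu>" and \<beta>: "0 \<le> \<beta>" and c: "c \<noteq> 0"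
    and eq: "\<And>i. i < m \<Longrightarrow> y i + of_real \<mu> * (\<Sum>j<m. of_real (s i j * d j) * y j) = c"
  obtains r where "\<And>j. j < m \<Longrightarrow> y j = c * of_real (r j)"
    and "\<And>i. i < m \<Longrightarrow> r i + \<mu> * (\<Sum>j<m. s i j * d j * r j) = 1"
proof
  have scaled: "y i / c + of_real \<mu> * (\<Sum>j<m. of_real (s i j * d j) * (y j / c)) = 1" if "i < m" for i
    using eq[OF that] c by (simp add: sum_divide_distrib[symmetric] add_divide_distrib[symmetric] mult_ac)
  have Im_eq: "Im (y i / c) + \<mu> * (\<Sum>j<m. s i j * d j * Im (y j / c)) = 0" if "i < m" for i
    using arg_cong[OF scaled[OF that], of Im] by (simp del: times_divide_eq_right)
  show "y j = c * of_real (Re (y j / c))" if "j < m" for j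
  proof -
    have "Im (y j / c) = 0"
      by (rule skew_pencil_injective_real[where r="\<lambda>j. Im (y j / c)", OF sym d \<mu> \<beta> Im_eq that])
    then have "of_real (Re (y j / c)) = y j / c"
      by (simp add: complex_eq_iff)
    then show ?thesis
      using c by simp
  qed
  show "Re (y i / c) + \<mu> * (\<Sum>j<m. s i j * d j * Re (y j / c)) = 1" if "i < m" for i
    using arg_cong[OF scaled[OF that], of Re] by (simp del: times_divide_eq_right)
qed

lemma skew_pencil_eigenvalue:
  fixes y :: "nat \<Rightarrow> complex" and d :: "nat \<Rightarrow> real" and s :: "nat \<Rightarrow> nat \<Rightarrow> real"
  assumes sym: "\<And>i j. i < m \<Longrightarrow> j < m \<Longrightarrow> s i j + s j i = 2 * \<beta>"
    and d: "\<And>j. j < m \<Longrightarrow> 0 < d j" and \<mu>: "0 < \<mu>" and \<beta>: "0 < \<beta>" and \<gamma>: "0 < \<gamma>"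
    and y0: "l < m" "y l \<noteq> 0"
    and eq: "\<And>i. i < m \<Longrightarrow> y i + of_real \<mu> * (\<Sum>j<m. of_real ((s i j + \<gamma>) * d j) * y j)
                          = z * (y i + of_real \<mu> * (\<Sum>j<m. of_real (s i j * d j) * y j))"
  shows "z \<in> complex_of_real ` {1..<1 + \<gamma> / \<beta>}"
proof (cases "z = 1")
  case True
  then show ?thesis using \<beta> \<gamma> by (auto intro!: image_eqI[of _ _ 1])
next
  case False
  have \<mu>\<beta>: "0 \<le> \<mu>" "0 \<le> \<beta>" using \<mu> \<beta> by simp_all
  define Q where "Q i = y i + of_real \<mu> * (\<Sum>j<m. of_real (s i j * d j) * y j)" for i
  define \<sigma> where "\<sigma> = (\<Sum>j<m. of_real (d j) * y j)"
  define \<kappa> where "\<kappa> = of_real (\<mu> * \<gamma>) * \<sigma> / (z - 1)"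
  have shifted: "Q i + of_real (\<mu> * \<gamma>) * \<sigma> = z * Q i" if i: "i < m" for i
  proof -
    have split: "(\<Sum>j<m. of_real ((s i j + \<gamma>) * d j) * y j)
        = (\<Sum>j<m. of_real (s i j * d j) * y j) + of_real \<gamma> * \<sigma>"
      by (simp add: \<sigma>_def ring_distribs sum.distrib sum_distrib_left mult_ac)
    show ?thesis
      using eq[OF i] unfolding Q_def split by (simp add: algebra_simps)
  qed
  then have Q: "Q i = \<kappa>" if "i < m" for i
    using that False unfolding \<kappa>_def by (simp add: field_simps)
  have "\<kappa> \<noteq> 0"
  proof
    assume "\<kappa> = 0"
    then have Q0: "y i + of_real \<mu> * (\<Sum>j<m. of_real (s i j * d j) * y j) = 0" if "i < m" for i
      using Q[OF that] unfolding Q_def by simp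
    have "y l = 0"
      by (rule skew_pencil_injective[where y=y, OF sym d \<mu>\<beta> Q0 y0(1)])
    with y0(2) show False by simp
  qed
  then obtain r where y_r: "\<And>j. j < m \<Longrightarrow> y j = \<kappa> * of_real (r j)"
    and r: "\<And>i. i < m \<Longrightarrow> r i + \<mu> * (\<Sum>j<m. s i j * d j * r j) = 1"
    using skew_pencil_constant_rhs[where c=\<kappa> and y=y, OF sym d \<mu>\<beta> \<open>\<kappa> \<noteq> 0\<close> Q[unfolded Q_def]] by blast
  define t where "t = (\<Sum>j<m. d j * r j)"
  have t: "0 < t" "\<mu> * \<beta> * t < 1"
    using skew_pencil_unit_rhs_bounds[OF sym d \<mu>\<beta> _ r] y0(1) unfolding t_def by auto
  have "\<sigma> = \<kappa> * of_real t"
    unfolding \<sigma>_def t_def by (simp add: y_r sum_distrib_left mult_ac)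
  then have "\<kappa> * (1 + of_real (\<mu> * \<gamma> * t)) = \<kappa> * z"
    using shifted[OF y0(1)] Q[OF y0(1)] by (simp add: algebra_simps)
  then have z: "z = of_real (1 + \<mu> * \<gamma> * t)"
    using \<open>\<kappa> \<noteq> 0\<close> by simp
  have "\<mu> * \<gamma> * t = \<gamma> / \<beta> * (\<mu> * \<beta> * t)"
    using \<beta> by (simp add: field_simps)
  also have "\<dots> < \<gamma> / \<beta> * 1"
    using t \<beta> \<gamma> by (intro mult_strict_left_mono) auto
  finally show ?thesis
    unfolding z using \<mu> \<gamma> t by (intro imageI) simp
qed

section \<open>The Sinc matrices\<close>

lemma sinc_int_minus: "sinc_int (- x) = - sinc_int x"
proof -
  let ?f = "\<lambda>t::real. sin (pi * t) / (pi * t)"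
  have reflect: "integral {-b..0} ?f = integral {0..b} ?f" for b
    using integral_reflect_real[of b 0 ?f] by simp
  consider "x = 0" | "x > 0" | "x < 0" by linarith
  then show ?thesis
    by cases (use reflect[of "-x"] in \<open>simp_all add: sinc_int_def reflect\<close>)
qed

lemma sinc_pt_bounds:
  assumes "T > 0"
  shows "0 < sinc_pt M h T l" "sinc_pt M h T l < T"
  using assms by (simp_all add: sinc_pt_def field_simps add_pos_pos)

lemma Dmat_carrier: "Dmat M h T \<in> carrier_mat (2*M+1) (2*M+1)"
  by (simp add: Dmat_def)

lemma diagonal_Dmat: "diagonal_mat (Dmat M h T)"
  by (simp add: Dmat_def diagonal_mat_def)

lemma Dmat_diag_pos:
  assumes "h > 0" "T > 0" "j < 2*M+1"
  shows "0 < Dmat M h T $$ (j,j)"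
  using assms sinc_pt_bounds[OF assms(2), of M h j] by (simp add: Dmat_def)

lemma Iinv_carrier: "Iinv M \<in> carrier_mat (2*M+1) (2*M+1)"
  by (simp add: Iinv_def)

lemma Smat_carrier: "Smat M \<omega> \<in> carrier_mat (2*M+1) (2*M+1)"
  unfolding carrier_mat_def Smat_def Iinv_def by simp

lemma Smat_index:
  "i < 2*M+1 \<Longrightarrow> j < 2*M+1 \<Longrightarrow> Smat M \<omega> $$ (i,j) = (1 - \<omega>)/2 + sinc_int (of_int (int i - int j))"
  by (simp add: Smat_def Iinv_def)

lemma Iinv_index_Smat:
  "i < 2*M+1 \<Longrightarrow> j < 2*M+1 \<Longrightarrow> Iinv M $$ (i,j) = Smat M \<omega> $$ (i,j) + \<omega>/2"
  by (simp add: Smat_def Iinv_def)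

lemma Smat_add_transpose:
  assumes "i < 2*M+1" "j < 2*M+1"
  shows "Smat M \<omega> $$ (i,j) + Smat M \<omega> $$ (j,i) = 2 * ((1 - \<omega>)/2)"
proof -
  have "sinc_int (of_int (int j - int i)) = - sinc_int (of_int (int i - int j))"
    using sinc_int_minus[of "of_int (int i - int j)"] by simp
  then show ?thesis using assms by (simp add: Smat_index)
qed

lemma Iinv_Dmat_rank_one_update:
  "Iinv M * Dmat M h T = Smat M \<omega> * Dmat M h T
     - mat (2*M+1) 1 (\<lambda>_. 1) * mat 1 (2*M+1) (\<lambda>(_, j). - \<omega>/2 * Dmat M h T $$ (j,j))"
  (is "_ = _ - ?e * ?g")
proof (rule eq_matI)
  let ?m = "2*M+1" and ?D = "Dmat M h T"
  have eg: "?e * ?g \<in> carrier_mat ?m ?m"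
    by (rule mult_carrier_mat[of _ _ 1]) simp_all
  fix i j assume "i < dim_row (Smat M \<omega> * ?D - ?e * ?g)" "j < dim_col (Smat M \<omega> * ?D - ?e * ?g)"
  then have i: "i < ?m" and j: "j < ?m" using eg by auto
  have eg_ij: "(?e * ?g) $$ (i,j) = - \<omega>/2 * ?D $$ (j,j)"
    using i j by (simp add: scalar_prod_def)
  have "(Iinv M * ?D) $$ (i,j) = Iinv M $$ (i,j) * ?D $$ (j,j)"
    by (rule index_mult_diagonal_mat[OF Iinv_carrier Dmat_carrier diagonal_Dmat i j])
  also have "\<dots> = Smat M \<omega> $$ (i,j) * ?D $$ (j,j) - (?e * ?g) $$ (i,j)"
    unfolding eg_ij by (simp add: Iinv_index_Smat[OF i j, where \<omega>=\<omega>] algebra_simps)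
  also have "\<dots> = (Smat M \<omega> * ?D) $$ (i,j) - (?e * ?g) $$ (i,j)"
    by (simp only: index_mult_diagonal_mat[OF Smat_carrier Dmat_carrier diagonal_Dmat i j])
  also have "\<dots> = (Smat M \<omega> * ?D - ?e * ?g) $$ (i,j)"
    using i j eg by (intro index_minus_mat(1)[symmetric]) auto
  finally show "(Iinv M * ?D) $$ (i,j) = (Smat M \<omega> * ?D - ?e * ?g) $$ (i,j)" .
qed (use Iinv_carrier[of M] Dmat_carrier[of M h T] in auto)

lemma sinc_system_low_rank_update:
  fixes K :: "real mat"
  assumes K: "K \<in> carrier_mat n n"
  obtains G H where "G \<in> carrier_mat ((2*M+1)*n) n" "H \<in> carrier_mat n ((2*M+1)*n)"
    "1\<^sub>m ((2*M+1)*n) - kron (Iinv M * Dmat M h T) K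
       = (1\<^sub>m ((2*M+1)*n) - kron (Smat M \<omega> * Dmat M h T) K) + G * H"
proof -
  let ?m = "2*M+1" and ?D = "Dmat M h T"
  define e where "e = mat ?m 1 (\<lambda>_. 1::real)"
  define g where "g = mat 1 ?m (\<lambda>(_, j). - \<omega>/2 * ?D $$ (j,j))"
  have SD: "Smat M \<omega> * ?D \<in> carrier_mat ?m ?m"
    by (rule mult_carrier_mat[OF Smat_carrier Dmat_carrier])
  have G: "kron e K \<in> carrier_mat (?m*n) n" and H: "kron g (1\<^sub>m n) \<in> carrier_mat n (?m*n)"
    using kron_carrier_mat[of e ?m 1 K n n] kron_carrier_mat[of g 1 ?m "1\<^sub>m n" n n] K
    by (auto simp: e_def g_def)
  have "e * g \<in> carrier_mat ?m ?m"
    unfolding e_def g_def by (rule mult_carrier_mat[of _ _ 1]) simp_all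
  then have "kron (Iinv M * ?D) K = kron (Smat M \<omega> * ?D) K - kron e K * kron g (1\<^sub>m n)"
    using Iinv_Dmat_rank_one_update[of M h T \<omega>] kron_diff_left[OF SD]
      kron_mult[of e ?m 1 K n n g ?m "1\<^sub>m n" n] K
    by (simp add: e_def g_def)
  moreover have "1\<^sub>m N - (X - Y) = (1\<^sub>m N - X) + Y"
    if "X \<in> carrier_mat N N" "Y \<in> carrier_mat N N" for N and X Y :: "real mat"
    using that by (intro eq_matI) auto
  ultimately show thesis
    using that[OF G H] kron_carrier_mat[OF SD K] mult_carrier_mat[OF G H] by simp
qed

lemma sinc_preconditioner_invertible:
  fixes K \<Lambda> :: "real mat"
  assumes hT: "h > 0" "T > 0" and \<omega>: "\<omega> \<le> 1"
    and K: "K \<in> carrier_mat n n" and sim: "similar_mat K \<Lambda>" and diag: "diagonal_mat \<Lambda>"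
    and neg: "\<forall>l<n. \<Lambda> $$ (l,l) < 0"
  shows "invertible_mat (1\<^sub>m ((2*M+1)*n) - kron (Smat M \<omega> * Dmat M h T) K)"
    (is "invertible_mat ?P")
proof -
  let ?m = "2*M+1"
  have P: "?P \<in> carrier_mat (?m*n) (?m*n)"
    by (rule minus_carrier_mat, rule kron_carrier_mat[OF mult_carrier_mat[OF Smat_carrier Dmat_carrier] K])
  have "det (map_mat complex_of_real ?P) \<noteq> 0"
  proof
    assume "det (map_mat complex_of_real ?P) = 0"
    then obtain v where v: "v \<in> carrier_vec (?m*n)" "v \<noteq> 0\<^sub>v (?m*n)"
      and Pv: "map_mat complex_of_real ?P *\<^sub>v v = 0\<^sub>v (?m*n)"
      using det_0_iff_vec_prod_zero_field[of "map_mat complex_of_real ?P"] P by auto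
    have "map_mat complex_of_real ?P *\<^sub>v v = 0 \<cdot>\<^sub>v (map_mat complex_of_real ?P *\<^sub>v v)"
      unfolding Pv by (rule eq_vecI) simp_all
    from kron_pencil_diagonalizable_eigenvector[OF Smat_carrier Smat_carrier Dmat_carrier diagonal_Dmat
        K sim diag neg v this]
    obtain \<mu> and y :: "nat \<Rightarrow> complex" and j0 where \<mu>: "0 < \<mu>" and j0: "j0 < ?m" "y j0 \<noteq> 0"
      and y: "\<forall>i<?m. y i + of_real \<mu> * (\<Sum>j<?m. of_real (Smat M \<omega> $$ (i,j) * Dmat M h T $$ (j,j)) * y j) = 0"
      by auto
    have "y j0 = 0"
      using \<mu> \<omega>
      by (intro skew_pencil_injective[where m="?m" and s="\<lambda>i j. Smat M \<omega> $$ (i,j)" and \<beta>="(1 - \<omega>)/2"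
          and d="\<lambda>j. Dmat M h T $$ (j,j)" and y=y, OF Smat_add_transpose[where M=M and \<omega>=\<omega>]
          Dmat_diag_pos[where M=M, OF hT] _ _ y[rule_format] j0(1)]) simp_all
    with j0 show False
      by simp
  qed
  then show ?thesis
    using P by (intro invertible_mat_if_det_nonzero[OF P]) simp
qed

lemma sinc_pencil_spectrum:
  fixes K \<Lambda> :: "real mat"
  assumes hT: "h > 0" "T > 0" and \<omega>: "0 < \<omega>" "\<omega> < 1"
    and K: "K \<in> carrier_mat n n" and sim: "similar_mat K \<Lambda>" and diag: "diagonal_mat \<Lambda>"
    and neg: "\<forall>l<n. \<Lambda> $$ (l,l) < 0"
    and v: "v \<in> carrier_vec ((2*M+1)*n)" "v \<noteq> 0\<^sub>v ((2*M+1)*n)"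
    and eq: "map_mat complex_of_real (1\<^sub>m ((2*M+1)*n) - kron (Iinv M * Dmat M h T) K) *\<^sub>v v
           = z \<cdot>\<^sub>v (map_mat complex_of_real (1\<^sub>m ((2*M+1)*n) - kron (Smat M \<omega> * Dmat M h T) K) *\<^sub>v v)"
  shows "z \<in> complex_of_real ` {1..<1/(1-\<omega>)}"
proof -
  let ?m = "2*M+1" and ?d = "\<lambda>j. Dmat M h T $$ (j,j)"
  obtain \<mu> y j0 where \<mu>: "0 < \<mu>" and y0: "j0 < ?m" "y j0 \<noteq> 0"
    and y: "\<forall>i<?m. y i + of_real \<mu> * (\<Sum>j<?m. of_real (Iinv M $$ (i,j) * ?d j) * y j)
              = z * (y i + of_real \<mu> * (\<Sum>j<?m. of_real (Smat M \<omega> $$ (i,j) * ?d j) * y j))"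
    using kron_pencil_diagonalizable_eigenvector[OF Iinv_carrier Smat_carrier Dmat_carrier diagonal_Dmat
        K sim diag neg v eq] by auto
  have y': "y i + of_real \<mu> * (\<Sum>j<?m. of_real ((Smat M \<omega> $$ (i,j) + \<omega>/2) * ?d j) * y j)
      = z * (y i + of_real \<mu> * (\<Sum>j<?m. of_real (Smat M \<omega> $$ (i,j) * ?d j) * y j))" if "i < ?m" for i
  proof -
    have "(\<Sum>j<?m. of_real ((Smat M \<omega> $$ (i,j) + \<omega>/2) * ?d j) * y j)
        = (\<Sum>j<?m. of_real (Iinv M $$ (i,j) * ?d j) * y j)"
      using that by (intro sum.cong refl) (simp add: Iinv_index_Smat[where \<omega>=\<omega>])
    then show ?thesis using y that by simp
  qed
  have "z \<in> complex_of_real ` {1..<1 + (\<omega>/2) / ((1 - \<omega>)/2)}"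
    by (rule skew_pencil_eigenvalue[where m="?m" and s="\<lambda>i j. Smat M \<omega> $$ (i,j)"
          and \<beta>="(1 - \<omega>)/2" and d="?d" and y=y and l=j0,
          OF Smat_add_transpose[where M=M and \<omega>=\<omega>] Dmat_diag_pos[where M=M, OF hT] \<mu> _ _ y0 y'])
      (use \<omega> in simp_all)
  moreover have "1 + (\<omega>/2) / ((1 - \<omega>)/2) = 1/(1-\<omega>)"
    using \<omega> by (simp add: field_simps)
  ultimately show ?thesis by simp
qed

theorem theorem3p4:
  fixes M n :: nat and h T \<omega> :: real and K :: "real mat"
  assumes "M \<ge> 1" and "h > 0" and "T > 0"
    and "0 < \<omega>" and "\<omega> < 1"
    and K: "K \<in> carrier_mat n n"
    and diag: "\<exists>\<Lambda>. diagonal_mat \<Lambda> \<and> similar_mat K \<Lambda> \<and> (\<forall>i<n. \<Lambda> $$ (i, i) < 0)"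
  shows
    "let m = 2*M+1;
         \<A> = 1\<^sub>m (m*n) - kron (Iinv M * Dmat M h T) K;
         \<P> = 1\<^sub>m (m*n) - kron (Smat M \<omega> * Dmat M h T) K;
         C = map_mat complex_of_real (mat_inv \<P> * \<A>)
     in invertible_mat \<P>
        \<and> (\<Sum>z\<in>{z. eigenvalue C z \<and> z \<noteq> 1}. alg_mult C z) \<le> n
        \<and> {z. eigenvalue C z} \<subseteq> complex_of_real ` {1..<1/(1-\<omega>)}"
proof -
  obtain \<Lambda> where \<Lambda>: "diagonal_mat \<Lambda>" "similar_mat K \<Lambda>" "\<forall>i<n. \<Lambda> $$ (i, i) < 0"
    using diag by blast
  define N where "N = (2*M+1)*n"
  define A where "A = 1\<^sub>m N - kron (Iinv M * Dmat M h T) K"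
  define P where "P = 1\<^sub>m N - kron (Smat M \<omega> * Dmat M h T) K"
  define C where "C = map_mat complex_of_real (mat_inv P * A)"
  have A: "A \<in> carrier_mat N N" and P: "P \<in> carrier_mat N N"
    using K by (auto simp: A_def P_def N_def kron_def Iinv_def Smat_def Dmat_def)
  have inv: "invertible_mat P"
    unfolding P_def N_def using sinc_preconditioner_invertible assms \<Lambda> by simp
  note P_inv = mat_inv_inverse[OF inv P]
  obtain G H where G: "G \<in> carrier_mat N n" and H: "H \<in> carrier_mat n N" and AP: "A = P + G * H"
    using sinc_system_low_rank_update[OF K, where M=M and h=h and T=T and \<omega>=\<omega>]
    unfolding A_def P_def N_def by blast
  have "(\<Sum>z\<in>{z. eigenvalue C z \<and> z \<noteq> 1}. alg_mult C z) \<le> n"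
    unfolding C_def AP by (rule alg_mult_preconditioned_low_rank_update[OF P P_inv(1,3) G H])
  moreover have "z \<in> complex_of_real ` {1..<1/(1-\<omega>)}" if eig: "eigenvalue C z" for z
  proof -
    obtain v where "v \<in> carrier_vec N" "v \<noteq> 0\<^sub>v N"
      "map_mat complex_of_real A *\<^sub>v v = z \<cdot>\<^sub>v (map_mat complex_of_real P *\<^sub>v v)"
      using eigenvalue_of_real_inverse_mult[OF P P_inv(1) A P_inv(2)] eig unfolding C_def by blast
    then show ?thesis
      using sinc_pencil_spectrum[OF assms(2-5) K \<Lambda>(2,1,3)] unfolding A_def P_def N_def by blast
  qed
  ultimately show ?thesis
    using inv unfolding Let_def A_def P_def N_def C_def by auto
qed

end
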